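(* Consider $\texttt{CCI}_{n,\mu}(T,C,I,J)$ with $\mathcal{S},\mathcal{C}^{\text{out}},\mathcal{C}^{\text{in}}\subseteq\mathbb{N}$, and assume $\mathbb{E}[T^{1+\varepsilon}]<\infty$ for some $\varepsilon>0$, $\inf_i\{\lambda_i:\lambda_i>0\}>0$ and $\inf_j\{\varrho_j:\varrho_j>0\}>0$. Let $t,s\in\mathcal{S}$ be two vertex types that are stable at tolerance $\tau\in(0,1)$, and for $a\in[\lfloor\mu n\rfloor]$ let $\mathcal{A}^{(a)}_{ts}$ be the event that arc $a$ is placed from a vertex of type $t$ to a vertex of type $s$. Then there exists a constant $\widehat{C}>0$ such that $$\Big|\mathbb{P}(\mathcal{A}^{(a)}_{ts})-\frac{q_tq_s\kappa(t,s)}{\mu}\Big|\le\widehat{C}\log(n)n^{-\tau/2},$$ where $\kappa(t,s)=\mu\sum_{i,j}p_{ij}I(t,i)J(s,j)/(\lambda_i\varrho_j)$.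
   Context: Inputs: type distribution $T$ on $\mathcal{S}$, $q_k=\mathbb{P}(T=k)$; colour distribution $C=(C^{\text{out}},C^{\text{in}})$, $p_{ij}=\mathbb{P}(C^{\text{out}}=i,C^{\text{in}}=j)$; indicators $I:\mathcal{S}\times\mathcal{C}^{\text{out}}\to\{0,1\}$, $J:\mathcal{S}\times\mathcal{C}^{\text{in}}\to\{0,1\}$; $\mu>0$; $\lambda_i=\sum_kq_kI(k,i)$, $\varrho_j=\sum_kq_kJ(k,j)$. $\texttt{CCI}_{n,\mu}(T,C,I,J)$: vertex set $[n]$, i.i.d. types $T_v\sim T$; for each $a\in[\lfloor\mu n\rfloor]$ an independent colour $C_a\sim C$; choose $v$ uniformly from $\{v:I(T_v,C^{\text{out}}_a)=1\}$ and independently $w$ uniformly from $\{w:J(T_w,C^{\text{in}}_a)=1\}$, and add arc $a=(v,w)$. Stability: $u_n^\uparrow(\tau)=\inf\{t:q_s<n^{-1+\tau}\ \forall s\ge t\}$; type $t$ is stable at tolerance $\tau$ if $t<u_n^\uparrow(\tau)$. *)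

theory Defs
  imports "HOL-Probability.Probability"
begin

text \<open>Types and colours are natural numbers. T : type distribution, C : joint colour
distribution (out, in). Indicators I, J are Boolean-valued.\<close>

definition lam :: "nat pmf \<Rightarrow> (nat \<Rightarrow> nat \<Rightarrow> bool) \<Rightarrow> nat \<Rightarrow> real" where
  "lam T I i = measure_pmf.prob T {k. I k i}"

definition rho :: "nat pmf \<Rightarrow> (nat \<Rightarrow> nat \<Rightarrow> bool) \<Rightarrow> nat \<Rightarrow> real" where
  "rho T J j = measure_pmf.prob T {k. J k j}"

text \<open>Distribution of one arc given the vertex types ty on vertex set {1..n}.
If a candidate set is empty the arc is not placed (None).\<close>
definition arc_pmf :: "(nat \<times> nat) pmf \<Rightarrow> (nat \<Rightarrow> nat \<Rightarrow> bool) \<Rightarrow> (nat \<Rightarrow> nat \<Rightarrow> bool)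
    \<Rightarrow> nat \<Rightarrow> (nat \<Rightarrow> nat) \<Rightarrow> (nat \<times> nat) option pmf" where
  "arc_pmf C I J n ty =
     bind_pmf C (\<lambda>c.
       (let Vo = {v \<in> {1..n}. I (ty v) (fst c)};
            Wi = {w \<in> {1..n}. J (ty w) (snd c)}
        in if Vo = {} \<or> Wi = {} then return_pmf None
           else bind_pmf (pmf_of_set Vo) (\<lambda>v.
                  bind_pmf (pmf_of_set Wi) (\<lambda>w. return_pmf (Some (v, w))))))"

definition CCI :: "nat \<Rightarrow> real \<Rightarrow> nat pmf \<Rightarrow> (nat \<times> nat) pmf \<Rightarrow> (nat \<Rightarrow> nat \<Rightarrow> bool)
    \<Rightarrow> (nat \<Rightarrow> nat \<Rightarrow> bool) \<Rightarrow> ((nat \<Rightarrow> nat) \<times> (nat \<Rightarrow> (nat \<times> nat) option)) pmf" where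
  "CCI n \<mu> T C I J =
     bind_pmf (Pi_pmf {1..n} 0 (\<lambda>_. T)) (\<lambda>ty.
       map_pmf (\<lambda>arcs. (ty, arcs))
         (Pi_pmf {1..nat \<lfloor>\<mu> * real n\<rfloor>} None (\<lambda>a. arc_pmf C I J n ty)))"

definition arc_event :: "nat \<Rightarrow> nat \<Rightarrow> nat \<Rightarrow> ((nat \<Rightarrow> nat) \<times> (nat \<Rightarrow> (nat \<times> nat) option)) set" where
  "arc_event a t s = {\<omega>. \<exists>v w. snd \<omega> a = Some (v, w) \<and> fst \<omega> v = t \<and> fst \<omega> w = s}"

definition u_up :: "nat pmf \<Rightarrow> nat \<Rightarrow> real \<Rightarrow> nat" where
  "u_up T n \<tau> = Inf {t. \<forall>s\<ge>t. pmf T s < real n powr (\<tau> - 1)}"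

definition stable :: "nat pmf \<Rightarrow> nat \<Rightarrow> real \<Rightarrow> nat \<Rightarrow> bool" where
  "stable T n \<tau> t \<longleftrightarrow> t < u_up T n \<tau>"

definition kappa :: "real \<Rightarrow> nat pmf \<Rightarrow> (nat \<times> nat) pmf \<Rightarrow> (nat \<Rightarrow> nat \<Rightarrow> bool)
    \<Rightarrow> (nat \<Rightarrow> nat \<Rightarrow> bool) \<Rightarrow> nat \<Rightarrow> nat \<Rightarrow> real" where
  "kappa \<mu> T C I J t s = \<mu> * measure_pmf.expectation C
     (\<lambda>(i, j). (if I t i \<and> J s j then 1 else 0) / (lam T I i * rho T J j))"

end

theory Submission
  imports Defs
begin

(*
  Given the vertex types, arc a of colour (i, j) joins a uniform vertex among those eligible
  for out-colour i to a uniform vertex among those eligible for in-colour j. Hence the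
  probability of the event is the C-average of the expected product of two conditional
  empirical frequencies: that of type t among the I(-, i)-eligible vertices and that of type s
  among the J(-, j)-eligible ones. An empirical frequency of a set deviates in mean from its
  probability by at most n^(-1/2), by the second moment of a sum of independent centred
  indicators. A ratio of two such frequencies whose denominator has probability lambda_i >= delta
  is therefore within 4 / (delta sqrt n) of q_t I(t, i) / lambda_i in mean, and the product of
  two of them within 8 / (delta sqrt n), which is O(log n * n^(-tau/2)).
*)

lemma integrable_measure_pmf_bounded:
  fixes f :: "'a \<Rightarrow> real"
  assumes "\<And>x. \<bar>f x\<bar> \<le> B"
  shows "integrable (measure_pmf M) f"
  by (rule measure_pmf.integrable_const_bound[where B = B]) (use assms in auto)

lemma prob_bind_pmf:
  "measure_pmf.prob (bind_pmf M N) X = (\<integral>x. measure_pmf.prob (N x) X \<partial>M)"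
proof -
  have "ennreal (measure_pmf.prob (bind_pmf M N) X) = emeasure (bind_pmf M N) X"
    by (simp add: measure_pmf.emeasure_eq_measure)
  also have "\<dots> = (\<integral>\<^sup>+x. ennreal (measure_pmf.prob (N x) X) \<partial>M)"
    by (subst emeasure_bind_pmf) (simp add: measure_pmf.emeasure_eq_measure)
  also have "\<dots> = ennreal (\<integral>x. measure_pmf.prob (N x) X \<partial>M)"
    by (intro nn_integral_eq_integral integrable_measure_pmf_bounded[where B = 1]) auto
  finally show ?thesis by (simp add: integral_nonneg)
qed

lemma integral_prob_commute_pmf:
  fixes A :: "'a pmf" and B :: "'b pmf" and K :: "'a \<Rightarrow> 'b \<Rightarrow> 'c pmf"
  shows "(\<integral>x. (\<integral>y. measure_pmf.prob (K x y) (S x) \<partial>B) \<partial>A)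
     = (\<integral>y. (\<integral>x. measure_pmf.prob (K x y) (S x) \<partial>A) \<partial>B)"
proof -
  define E where "E = {(x, z). z \<in> S x}"
  have E: "Pair x -` E = S x" for x unfolding E_def by auto
  have "(\<integral>x. (\<integral>y. measure_pmf.prob (K x y) (S x) \<partial>B) \<partial>A)
      = measure_pmf.prob (bind_pmf A (\<lambda>x. bind_pmf B (\<lambda>y. map_pmf (Pair x) (K x y)))) E"
    by (simp add: prob_bind_pmf E)
  also have "\<dots> = measure_pmf.prob (bind_pmf B (\<lambda>y. bind_pmf A (\<lambda>x. map_pmf (Pair x) (K x y)))) E"
    by (subst bind_commute_pmf) (rule refl)
  also have "\<dots> = (\<integral>y. (\<integral>x. measure_pmf.prob (K x y) (S x) \<partial>A) \<partial>B)"
    by (simp add: prob_bind_pmf E)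
  finally show ?thesis .
qed

lemma abs_expectation_diff_le:
  fixes f g h :: "'a \<Rightarrow> real"
  assumes "integrable (measure_pmf M) f" "integrable (measure_pmf M) g" "integrable (measure_pmf M) h"
    and "\<And>x. \<bar>f x - g x\<bar> \<le> h x"
  shows "\<bar>measure_pmf.expectation M f - measure_pmf.expectation M g\<bar> \<le> measure_pmf.expectation M h"
proof -
  have "\<bar>measure_pmf.expectation M f - measure_pmf.expectation M g\<bar>
      = \<bar>measure_pmf.expectation M (\<lambda>x. f x - g x)\<bar>"
    using assms by simp
  also have "\<dots> \<le> measure_pmf.expectation M (\<lambda>x. \<bar>f x - g x\<bar>)"
    by (rule integral_abs_bound)
  also have "\<dots> \<le> measure_pmf.expectation M h"
    using assms by (intro integral_mono) auto
  finally show ?thesis .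
qed

lemma expectation_Pi_pmf_component:
  fixes f :: "'b \<Rightarrow> real"
  assumes "finite V" "u \<in> V"
  shows "measure_pmf.expectation (Pi_pmf V d p) (\<lambda>g. f (g u)) = measure_pmf.expectation (p u) f"
proof -
  have "measure_pmf.expectation (Pi_pmf V d p) (\<lambda>g. f (g u))
      = measure_pmf.expectation (map_pmf (\<lambda>g. g u) (Pi_pmf V d p)) f"
    by simp
  then show ?thesis using assms by (simp add: Pi_pmf_component)
qed

lemma integrable_Pi_pmf_component:
  fixes f :: "'b \<Rightarrow> real"
  assumes "finite V" "u \<in> V" "integrable (measure_pmf (p u)) f"
  shows "integrable (measure_pmf (Pi_pmf V d p)) (\<lambda>g. f (g u))"
proof -
  have "integrable (measure_pmf (map_pmf (\<lambda>g. g u) (Pi_pmf V d p))) f"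
    using assms by (simp add: Pi_pmf_component)
  then show ?thesis by simp
qed

lemma expectation_mult_Pi_pmf:
  fixes h :: "'b \<Rightarrow> real"
  assumes "finite V" "v \<in> V" "w \<in> V" "v \<noteq> w" "integrable (measure_pmf T) h"
  shows "measure_pmf.expectation (Pi_pmf V d (\<lambda>_. T)) (\<lambda>g. h (g v) * h (g w))
           = measure_pmf.expectation T h * measure_pmf.expectation T h"
proof -
  let ?P = "Pi_pmf V d (\<lambda>_. T)"
  have "prob_space.indep_vars ?P (\<lambda>_. borel) (\<lambda>u g. h (g u)) V"
    by (rule prob_space.indep_vars_compose2[OF measure_pmf.prob_space_axioms
          indep_vars_Pi_pmf[OF assms(1)]]) simp
  then have "prob_space.indep_vars ?P (\<lambda>_. borel) (\<lambda>u g. h (g u)) {v, w}"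
    by (rule prob_space.indep_vars_subset[OF measure_pmf.prob_space_axioms]) (use assms in auto)
  then have "measure_pmf.expectation ?P (\<lambda>g. \<Prod>u\<in>{v, w}. h (g u))
      = (\<Prod>u\<in>{v, w}. measure_pmf.expectation ?P (\<lambda>g. h (g u)))"
    by (intro prob_space.indep_vars_lebesgue_integral[OF measure_pmf.prob_space_axioms])
       (use assms in \<open>auto intro: integrable_Pi_pmf_component\<close>)
  then show ?thesis
    using assms by (simp add: expectation_Pi_pmf_component)
qed

lemma expectation_square_sum_Pi_pmf:
  fixes h :: "'b \<Rightarrow> real"
  assumes "finite V" "\<And>k. \<bar>h k\<bar> \<le> B" "measure_pmf.expectation T h = 0"
  shows "measure_pmf.expectation (Pi_pmf V d (\<lambda>_. T)) (\<lambda>g. (\<Sum>v\<in>V. h (g v))\<^sup>2)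
           = card V * measure_pmf.expectation T (\<lambda>k. (h k)\<^sup>2)"
proof -
  let ?P = "Pi_pmf V d (\<lambda>_. T)"
  have int: "integrable (measure_pmf M) (\<lambda>x. h (f x) * h (f' x))" for M :: "'c pmf" and f f'
  proof (rule integrable_measure_pmf_bounded)
    show "\<bar>h (f x) * h (f' x)\<bar> \<le> B * B" for x
      unfolding abs_mult by (intro mult_mono assms(2)) (use assms(2)[of "f x"] in auto)
  qed
  have cross: "measure_pmf.expectation ?P (\<lambda>g. h (g v) * h (g w))
      = (if v = w then measure_pmf.expectation T (\<lambda>k. (h k)\<^sup>2) else 0)"
    if "v \<in> V" "w \<in> V" for v w
  proof (cases "v = w")
    case False
    have "integrable (measure_pmf T) h"
      by (rule integrable_measure_pmf_bounded[OF assms(2)])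
    then show ?thesis
      using that assms False by (simp add: expectation_mult_Pi_pmf)
  qed (use that assms expectation_Pi_pmf_component[where f = "\<lambda>k. (h k)\<^sup>2"] in
         \<open>simp add: power2_eq_square\<close>)
  have "measure_pmf.expectation ?P (\<lambda>g. (\<Sum>v\<in>V. h (g v))\<^sup>2)
      = measure_pmf.expectation ?P (\<lambda>g. \<Sum>v\<in>V. \<Sum>w\<in>V. h (g v) * h (g w))"
    by (simp add: power2_eq_square sum_product)
  also have "\<dots> = (\<Sum>v\<in>V. \<Sum>w\<in>V. measure_pmf.expectation ?P (\<lambda>g. h (g v) * h (g w)))"
    by (simp add: Bochner_Integration.integral_sum int)
  also have "\<dots> = card V * measure_pmf.expectation T (\<lambda>k. (h k)\<^sup>2)"
    using assms(1) by (simp add: cross)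
  finally show ?thesis .
qed

lemma expectation_abs_le_of_expectation_square_le:
  fixes f :: "'a \<Rightarrow> real"
  assumes "\<And>x. \<bar>f x\<bar> \<le> B" "c > 0" "measure_pmf.expectation M (\<lambda>x. (f x)\<^sup>2) \<le> c\<^sup>2"
  shows "measure_pmf.expectation M (\<lambda>x. \<bar>f x\<bar>) \<le> c"
proof -
  have am_gm: "\<bar>f x\<bar> \<le> ((f x)\<^sup>2 / c + c) / 2" for x
  proof -
    have "0 \<le> (\<bar>f x\<bar> - c)\<^sup>2 / c" using assms(2) by simp
    then show ?thesis using assms(2) by (simp add: power2_eq_square field_simps)
  qed
  have "\<bar>(f x)\<^sup>2\<bar> \<le> B\<^sup>2" for x
    using power_mono[OF assms(1)[of x] abs_ge_zero, of 2] by simp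
  then have int_square: "integrable M (\<lambda>x. (f x)\<^sup>2)"
    by (rule integrable_measure_pmf_bounded)
  have "measure_pmf.expectation M (\<lambda>x. \<bar>f x\<bar>) \<le> measure_pmf.expectation M (\<lambda>x. ((f x)\<^sup>2 / c + c) / 2)"
  proof (rule integral_mono[OF _ _ am_gm])
    show "integrable M (\<lambda>x. \<bar>f x\<bar>)"
      using assms(1) by (intro integrable_measure_pmf_bounded[where B = B]) simp
  qed (use int_square in simp)
  also have "\<dots> = (measure_pmf.expectation M (\<lambda>x. (f x)\<^sup>2) / c + c) / 2"
    using int_square by simp
  also have "\<dots> \<le> (c\<^sup>2 / c + c) / 2"
    using assms(2,3) by (intro divide_right_mono add_right_mono) auto
  also have "\<dots> = c"
    by (simp add: power2_eq_square)
  finally show ?thesis .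
qed

lemma expectation_abs_empirical_freq_le:
  fixes T :: "'b pmf"
  assumes "finite V" "V \<noteq> {}"
  shows "measure_pmf.expectation (Pi_pmf V d (\<lambda>_. T))
           (\<lambda>g. \<bar>card {v\<in>V. g v \<in> B} / card V - measure_pmf.prob T B\<bar>) \<le> 1 / sqrt (card V)"
proof -
  define n where "n = real (card V)"
  define p where "p = measure_pmf.prob T B"
  define h where "h k = indicator B k - p" for k
  have n: "n > 0" using assms unfolding n_def by (simp add: card_gt_0_iff)
  have h_bound: "\<bar>h k\<bar> \<le> 1" for k
    using measure_nonneg[of T B] measure_pmf.prob_le_1[of T B]
    unfolding h_def p_def indicator_def by auto
  have freq_eq: "card {v\<in>V. g v \<in> B} / n - p = (\<Sum>v\<in>V. h (g v)) / n" for g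
  proof -
    have "(\<Sum>v\<in>V. h (g v)) = card {v\<in>V. g v \<in> B} - n * p"
      using assms(1) by (simp add: h_def sum_subtractf n_def indicator_def sum.If_cases Int_def)
    then show ?thesis using n by (simp add: field_simps)
  qed
  have sum_bound: "\<bar>\<Sum>v\<in>V. h (g v)\<bar> \<le> n" for g
  proof -
    have "\<bar>\<Sum>v\<in>V. h (g v)\<bar> \<le> (\<Sum>v\<in>V. \<bar>h (g v)\<bar>)" by (rule sum_abs)
    also have "\<dots> \<le> n"
      using sum_mono[of V "\<lambda>v. \<bar>h (g v)\<bar>" "\<lambda>_. 1"] h_bound unfolding n_def by simp
    finally show ?thesis .
  qed
  have mean_zero: "measure_pmf.expectation T h = 0"
    unfolding h_def p_def
    by (subst Bochner_Integration.integral_diff) (auto intro: integrable_measure_pmf_bounded[where B = 1])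
  have "measure_pmf.expectation (Pi_pmf V d (\<lambda>_. T)) (\<lambda>g. ((\<Sum>v\<in>V. h (g v)) / n)\<^sup>2)
      = n * measure_pmf.expectation T (\<lambda>k. (h k)\<^sup>2) / n\<^sup>2"
    unfolding power_divide n_def
    by (simp add: expectation_square_sum_Pi_pmf[OF assms(1) h_bound mean_zero])
  also have "\<dots> \<le> n * 1 / n\<^sup>2"
    using n h_bound abs_square_le_1
    by (intro divide_right_mono mult_left_mono measure_pmf.integral_le_const AE_pmfI
        integrable_measure_pmf_bounded[where B = 1]) auto
  also have "\<dots> = (1 / sqrt n)\<^sup>2"
    using n by (simp add: power2_eq_square power_divide)
  finally show ?thesis
    unfolding freq_eq n_def[symmetric] p_def[symmetric]
    using n sum_bound by (intro expectation_abs_le_of_expectation_square_le[where B = 1]) simp_all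
qed

lemma abs_ratio_diff_le:
  fixes c Y n q l \<delta> :: real
  assumes "0 \<le> c" "c \<le> Y" "0 < n" "0 \<le> q" "q \<le> l" "0 < \<delta>" "\<delta> \<le> l"
  shows "\<bar>c / Y - q / l\<bar> \<le> 2 / \<delta> * (\<bar>c / n - q\<bar> + \<bar>Y / n - l\<bar>)"
proof -
  define a where "a = c / n"
  define b where "b = Y / n"
  have l: "l > 0" using assms by simp
  have cY: "c / Y = a / b" unfolding a_def b_def using assms by (simp add: field_simps)
  show ?thesis
  proof (cases "b < l / 2")
    case True
    have "0 \<le> c / Y" "c / Y \<le> 1" "0 \<le> q / l" "q / l \<le> 1"
      using assms l by (auto simp: divide_le_eq_1)
    then have "\<bar>c / Y - q / l\<bar> \<le> 1" by linarith
    also have "\<dots> \<le> 2 / \<delta> * \<bar>b - l\<bar>"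
      using True assms by (simp add: field_simps)
    also have "\<dots> \<le> 2 / \<delta> * (\<bar>a - q\<bar> + \<bar>b - l\<bar>)"
      using assms by (intro mult_left_mono) auto
    finally show ?thesis unfolding a_def b_def .
  next
    case False
    then have b: "b \<ge> \<delta> / 2" "b > 0" using assms by linarith+
    have "\<bar>a / b - q / l\<bar> = \<bar>l * (a - q) + q * (l - b)\<bar> / (b * l)"
      using b l by (simp add: field_simps)
    also have "\<dots> \<le> (l * \<bar>a - q\<bar> + l * \<bar>b - l\<bar>) / (b * l)"
    proof (rule divide_right_mono)
      have "\<bar>q * (l - b)\<bar> \<le> l * \<bar>b - l\<bar>"
        using assms by (simp add: abs_mult abs_minus_commute mult_right_mono)
      then show "\<bar>l * (a - q) + q * (l - b)\<bar> \<le> l * \<bar>a - q\<bar> + l * \<bar>b - l\<bar>"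
        using l abs_triangle_ineq[of "l * (a - q)" "q * (l - b)"] by (simp add: abs_mult)
    qed (use b l in simp)
    also have "\<dots> = (\<bar>a - q\<bar> + \<bar>b - l\<bar>) / b"
      using l b by (simp add: field_simps)
    also have "\<dots> \<le> (\<bar>a - q\<bar> + \<bar>b - l\<bar>) / (\<delta> / 2)"
      using b assms by (intro divide_left_mono) auto
    also have "\<dots> = 2 / \<delta> * (\<bar>a - q\<bar> + \<bar>b - l\<bar>)"
      by simp
    finally show ?thesis unfolding cY a_def [symmetric] b_def [symmetric] .
  qed
qed

lemma abs_mult_diff_le:
  fixes r r' x x' :: real
  assumes "\<bar>r\<bar> \<le> 1" "\<bar>x'\<bar> \<le> 1"
  shows "\<bar>r * r' - x * x'\<bar> \<le> \<bar>r - x\<bar> + \<bar>r' - x'\<bar>"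
proof -
  have "r * r' - x * x' = r * (r' - x') + x' * (r - x)" by (simp add: algebra_simps)
  also have "\<bar>\<dots>\<bar> \<le> \<bar>r\<bar> * \<bar>r' - x'\<bar> + \<bar>x'\<bar> * \<bar>r - x\<bar>"
    using abs_triangle_ineq[of "r * (r' - x')" "x' * (r - x)"] by (simp add: abs_mult)
  also have "\<dots> \<le> \<bar>r' - x'\<bar> + \<bar>r - x\<bar>"
    using assms by (intro add_mono mult_left_le_one_le) auto
  finally show ?thesis by simp
qed

lemma ex_common_positive_lower_bound:
  fixes f :: "'a \<Rightarrow> real" and g :: "'b \<Rightarrow> real"
  assumes "\<And>i. 0 \<le> f i" "\<And>j. 0 \<le> g j"
    and "\<exists>\<delta>>0. \<forall>i. f i > 0 \<longrightarrow> f i \<ge> \<delta>" "\<exists>\<delta>>0. \<forall>j. g j > 0 \<longrightarrow> g j \<ge> \<delta>"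
  shows "\<exists>\<delta>>0. (\<forall>i. f i = 0 \<or> \<delta> \<le> f i) \<and> (\<forall>j. g j = 0 \<or> \<delta> \<le> g j)"
proof -
  obtain \<delta>\<^sub>f \<delta>\<^sub>g where "\<delta>\<^sub>f > 0" "\<forall>i. f i > 0 \<longrightarrow> f i \<ge> \<delta>\<^sub>f" "\<delta>\<^sub>g > 0" "\<forall>j. g j > 0 \<longrightarrow> g j \<ge> \<delta>\<^sub>g"
    using assms(3,4) by blast
  with assms(1,2) show ?thesis
    by (intro exI[of _ "min \<delta>\<^sub>f \<delta>\<^sub>g"]) (auto simp: less_le min_le_iff_disj)
qed

lemma inverse_sqrt_le_ln_mult_powr:
  fixes n :: nat and \<tau> :: real
  assumes "n \<ge> 2" "\<tau> \<le> 1"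
  shows "1 / sqrt n \<le> ln n * n powr (- \<tau> / 2) / ln 2"
proof -
  have "1 / sqrt n = n powr (- 1 / 2)"
    using assms by (simp add: powr_minus_divide powr_half_sqrt)
  also have "\<dots> \<le> n powr (- \<tau> / 2)"
    using assms by (intro powr_mono) auto
  also have "\<dots> = 1 * n powr (- \<tau> / 2)"
    by simp
  also have "\<dots> \<le> ln n / ln 2 * n powr (- \<tau> / 2)"
    using assms by (intro mult_right_mono) simp_all
  finally show ?thesis by simp
qed

(* The value is 0 when no v in V has g v in A; for the arc kernel this is the case
   in which the arc is not placed. *)
definition cond_freq :: "'v set \<Rightarrow> 'a set \<Rightarrow> 'a set \<Rightarrow> ('v \<Rightarrow> 'a) \<Rightarrow> real" where
  "cond_freq V B A g = card {v\<in>V. g v \<in> A \<inter> B} / card {v\<in>V. g v \<in> A}"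

lemma cond_freq_bounds:
  assumes "finite V"
  shows "0 \<le> cond_freq V B A g" "cond_freq V B A g \<le> 1"
proof -
  have "card {v\<in>V. g v \<in> A \<inter> B} \<le> card {v\<in>V. g v \<in> A}"
    using assms by (intro card_mono) auto
  then show "0 \<le> cond_freq V B A g" "cond_freq V B A g \<le> 1"
    unfolding cond_freq_def by (auto simp: divide_le_eq_1)
qed

lemma cond_prob_bounds:
  "0 \<le> measure_pmf.prob T (A \<inter> B) / measure_pmf.prob T A"
  "measure_pmf.prob T (A \<inter> B) / measure_pmf.prob T A \<le> 1"
  using measure_pmf.finite_measure_mono[of "A \<inter> B" A T]
  by (auto simp: divide_le_eq_1 less_le)

lemma expectation_abs_cond_freq_le:
  fixes T :: "'a pmf" and \<delta> :: real
  assumes "finite V" "V \<noteq> {}" "\<delta> > 0"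
    and "measure_pmf.prob T A = 0 \<or> \<delta> \<le> measure_pmf.prob T A"
  shows "measure_pmf.expectation (Pi_pmf V d (\<lambda>_. T))
           (\<lambda>g. \<bar>cond_freq V B A g - measure_pmf.prob T (A \<inter> B) / measure_pmf.prob T A\<bar>)
         \<le> 4 / (\<delta> * sqrt (card V))"
  (is "measure_pmf.expectation ?P (\<lambda>g. \<bar>cond_freq V B A g - ?x\<bar>) \<le> _")
proof (cases "measure_pmf.prob T A = 0")
  case True
  have "AE g in ?P. cond_freq V B A g = 0"
  proof (rule AE_pmfI)
    fix g assume "g \<in> set_pmf ?P"
    then have "g v \<in> set_pmf T" if "v \<in> V" for v
      using that by (auto simp: set_Pi_pmf[OF assms(1)] PiE_dflt_def)
    moreover have "set_pmf T \<inter> A = {}" using True by (simp add: measure_pmf_zero_iff)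
    ultimately have "{v\<in>V. g v \<in> A} = {}" by blast
    then show "cond_freq V B A g = 0" unfolding cond_freq_def by (simp only: card.empty) simp
  qed
  then have "measure_pmf.expectation ?P (\<lambda>g. \<bar>cond_freq V B A g - ?x\<bar>) = 0"
    using True by (subst integral_cong_AE[where g = "\<lambda>_. 0"]) (auto elim: eventually_mono)
  then show ?thesis using assms by simp
next
  case False
  let ?dev = "\<lambda>E g. \<bar>card {v\<in>V. g v \<in> E} / card V - measure_pmf.prob T E\<bar>"
  have \<delta>: "\<delta> \<le> measure_pmf.prob T A" using False assms by simp
  have dev_bound: "?dev E g \<le> 2" for E g
  proof -
    have "card {v\<in>V. g v \<in> E} \<le> card V" using assms by (intro card_mono) auto
    then have "card {v\<in>V. g v \<in> E} / card V \<le> 1" by (auto simp: divide_le_eq_1)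
    moreover have "0 \<le> card {v\<in>V. g v \<in> E} / card V" by simp
    ultimately show ?thesis
      using measure_pmf.prob_le_1[of T E] measure_nonneg[of T E] unfolding abs_le_iff by linarith
  qed
  have int_dev: "integrable ?P (?dev E)" for E
    using dev_bound by (intro integrable_measure_pmf_bounded[where B = 2]) simp
  have pointwise: "\<bar>cond_freq V B A g - ?x\<bar> \<le> 2 / \<delta> * (?dev (A \<inter> B) g + ?dev A g)" for g
    unfolding cond_freq_def using assms \<delta>
    by (intro abs_ratio_diff_le) (auto intro: card_mono measure_pmf.finite_measure_mono
        simp: card_gt_0_iff)
  have "measure_pmf.expectation ?P (\<lambda>g. \<bar>cond_freq V B A g - ?x\<bar>)
      \<le> measure_pmf.expectation ?P (\<lambda>g. 2 / \<delta> * (?dev (A \<inter> B) g + ?dev A g))"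
  proof (rule integral_mono[OF _ _ pointwise])
    have "\<bar>\<bar>cond_freq V B A g - ?x\<bar>\<bar> \<le> 1" for g
      using cond_freq_bounds[OF assms(1), of B A g] cond_prob_bounds[of T A B] by linarith
    then show "integrable ?P (\<lambda>g. \<bar>cond_freq V B A g - ?x\<bar>)"
      by (rule integrable_measure_pmf_bounded)
  qed (intro integrable_mult_right Bochner_Integration.integrable_add int_dev)
  also have "\<dots> = 2 / \<delta> * (measure_pmf.expectation ?P (?dev (A \<inter> B))
                           + measure_pmf.expectation ?P (?dev A))"
    by (simp only: integral_mult_right_zero Bochner_Integration.integral_add[OF int_dev int_dev])
  also have "\<dots> \<le> 2 / \<delta> * (1 / sqrt (card V) + 1 / sqrt (card V))"
    using assms by (intro mult_left_mono add_mono expectation_abs_empirical_freq_le) auto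
  also have "\<dots> = 4 / (\<delta> * sqrt (card V))" by simp
  finally show ?thesis .
qed

lemma abs_expectation_cond_freq_product_le:
  fixes T :: "'a pmf" and \<delta> :: real
  assumes "finite V" "V \<noteq> {}" "\<delta> > 0"
    and "measure_pmf.prob T A = 0 \<or> \<delta> \<le> measure_pmf.prob T A"
    and "measure_pmf.prob T A' = 0 \<or> \<delta> \<le> measure_pmf.prob T A'"
  shows "\<bar>measure_pmf.expectation (Pi_pmf V d (\<lambda>_. T)) (\<lambda>g. cond_freq V B A g * cond_freq V B' A' g)
           - measure_pmf.prob T (A \<inter> B) / measure_pmf.prob T A
             * (measure_pmf.prob T (A' \<inter> B') / measure_pmf.prob T A')\<bar>
         \<le> 8 / (\<delta> * sqrt (card V))"
proof -
  let ?P = "Pi_pmf V d (\<lambda>_. T)"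
  let ?x = "measure_pmf.prob T (A \<inter> B) / measure_pmf.prob T A"
  let ?x' = "measure_pmf.prob T (A' \<inter> B') / measure_pmf.prob T A'"
  let ?dev = "\<lambda>g. \<bar>cond_freq V B A g - ?x\<bar> + \<bar>cond_freq V B' A' g - ?x'\<bar>"
  have f: "\<bar>cond_freq V B A g\<bar> \<le> 1" "\<bar>cond_freq V B' A' g\<bar> \<le> 1" for g
    using cond_freq_bounds[OF assms(1), of B A g] cond_freq_bounds[OF assms(1), of B' A' g]
    unfolding abs_le_iff by linarith+
  have x: "\<bar>?x'\<bar> \<le> 1" "\<bar>cond_freq V B A g - ?x\<bar> \<le> 1" "\<bar>cond_freq V B' A' g - ?x'\<bar> \<le> 1" for g
    using cond_freq_bounds[OF assms(1), of B A g] cond_freq_bounds[OF assms(1), of B' A' g]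
      cond_prob_bounds[of T A B] cond_prob_bounds[of T A' B']
    unfolding abs_le_iff by linarith+
  have "\<bar>measure_pmf.expectation ?P (\<lambda>g. cond_freq V B A g * cond_freq V B' A' g)
          - measure_pmf.expectation ?P (\<lambda>_. ?x * ?x')\<bar>
      \<le> measure_pmf.expectation ?P ?dev"
  proof (rule abs_expectation_diff_le)
    show "\<bar>cond_freq V B A g * cond_freq V B' A' g - ?x * ?x'\<bar> \<le> ?dev g" for g
      using f x by (intro abs_mult_diff_le)
    show "integrable ?P (\<lambda>g. cond_freq V B A g * cond_freq V B' A' g)"
      using f by (intro integrable_measure_pmf_bounded[where B = 1]) (simp add: abs_mult mult_le_one)
    have "\<bar>?dev g\<bar> \<le> 2" for g
      using x(2,3)[of g] by simp
    then show "integrable ?P ?dev"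
      by (rule integrable_measure_pmf_bounded)
  qed simp
  also have "\<dots> = measure_pmf.expectation ?P (\<lambda>g. \<bar>cond_freq V B A g - ?x\<bar>)
                 + measure_pmf.expectation ?P (\<lambda>g. \<bar>cond_freq V B' A' g - ?x'\<bar>)"
    using x by (intro Bochner_Integration.integral_add integrable_measure_pmf_bounded[where B = 1]) simp_all
  also have "\<dots> \<le> 4 / (\<delta> * sqrt (card V)) + 4 / (\<delta> * sqrt (card V))"
    using assms by (intro add_mono expectation_abs_cond_freq_le)
  finally show ?thesis by simp
qed

definition arc_given_colour :: "(nat \<Rightarrow> nat \<Rightarrow> bool) \<Rightarrow> (nat \<Rightarrow> nat \<Rightarrow> bool) \<Rightarrow> nat
    \<Rightarrow> (nat \<Rightarrow> nat) \<Rightarrow> nat \<times> nat \<Rightarrow> (nat \<times> nat) option pmf" where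
  "arc_given_colour I J n ty c =
     (let Vo = {v \<in> {1..n}. I (ty v) (fst c)};
          Wi = {w \<in> {1..n}. J (ty w) (snd c)}
      in if Vo = {} \<or> Wi = {} then return_pmf None
         else bind_pmf (pmf_of_set Vo) (\<lambda>v.
                bind_pmf (pmf_of_set Wi) (\<lambda>w. return_pmf (Some (v, w)))))"

lemma arc_pmf_eq_bind: "arc_pmf C I J n ty = bind_pmf C (arc_given_colour I J n ty)"
  unfolding arc_pmf_def arc_given_colour_def ..

definition typed_arcs :: "nat \<Rightarrow> nat \<Rightarrow> (nat \<Rightarrow> nat) \<Rightarrow> (nat \<times> nat) option set" where
  "typed_arcs t s ty = {z. \<exists>v w. z = Some (v, w) \<and> ty v = t \<and> ty w = s}"

lemma prob_arc_given_colour: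
  "measure_pmf.prob (arc_given_colour I J n ty c) (typed_arcs t s ty)
     = cond_freq {1..n} {t} {k. I k (fst c)} ty * cond_freq {1..n} {s} {k. J k (snd c)} ty"
proof -
  define Vo where "Vo = {v \<in> {1..n}. I (ty v) (fst c)}"
  define Wi where "Wi = {w \<in> {1..n}. J (ty w) (snd c)}"
  have arc: "arc_given_colour I J n ty c = (if Vo = {} \<or> Wi = {} then return_pmf None
      else map_pmf Some (pair_pmf (pmf_of_set Vo) (pmf_of_set Wi)))"
    unfolding arc_given_colour_def Let_def Vo_def [symmetric] Wi_def [symmetric]
    by (simp add: pair_pmf_def map_bind_pmf)
  have freq_Vo: "cond_freq {1..n} {t} {k. I k (fst c)} ty = card (Vo \<inter> {v. ty v = t}) / card Vo"
    unfolding cond_freq_def Vo_def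
    by (intro arg_cong2[where f = "\<lambda>a b. real (card a) / real (card b)"]) auto
  have freq_Wi: "cond_freq {1..n} {s} {k. J k (snd c)} ty = card (Wi \<inter> {w. ty w = s}) / card Wi"
    unfolding cond_freq_def Wi_def
    by (intro arg_cong2[where f = "\<lambda>a b. real (card a) / real (card b)"]) auto
  show ?thesis
  proof (cases "Vo = {} \<or> Wi = {}")
    case True
    then have "cond_freq {1..n} {t} {k. I k (fst c)} ty * cond_freq {1..n} {s} {k. J k (snd c)} ty = 0"
      unfolding freq_Vo freq_Wi by auto
    moreover have "measure_pmf.prob (arc_given_colour I J n ty c) (typed_arcs t s ty) = 0"
      using True by (simp add: arc typed_arcs_def)
    ultimately show ?thesis by simp
  next
    case False
    have "Some -` typed_arcs t s ty = {v. ty v = t} \<times> {w. ty w = s}"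
      unfolding typed_arcs_def by auto
    then have "measure_pmf.prob (arc_given_colour I J n ty c) (typed_arcs t s ty)
        = measure_pmf.prob (pmf_of_set Vo) {v. ty v = t} * measure_pmf.prob (pmf_of_set Wi) {w. ty w = s}"
      using False by (simp add: arc measure_pmf_prob_product)
    also have "\<dots> = card (Vo \<inter> {v. ty v = t}) / card Vo * (card (Wi \<inter> {w. ty w = s}) / card Wi)"
      using False by (simp add: measure_pmf_of_set Vo_def Wi_def)
    finally show ?thesis unfolding freq_Vo freq_Wi .
  qed
qed

lemma prob_arc_event:
  assumes "a \<in> {1..nat \<lfloor>\<mu> * real n\<rfloor>}"
  shows "measure_pmf.prob (CCI n \<mu> T C I J) (arc_event a t s)
   = (\<integral>c. (\<integral>ty. cond_freq {1..n} {t} {k. I k (fst c)} ty * cond_freq {1..n} {s} {k. J k (snd c)} ty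
          \<partial>Pi_pmf {1..n} 0 (\<lambda>_. T)) \<partial>C)"
proof -
  let ?P = "Pi_pmf {1..n} 0 (\<lambda>_. T)"
  let ?Q = "\<lambda>ty. Pi_pmf {1..nat \<lfloor>\<mu> * real n\<rfloor>} None (\<lambda>a. arc_pmf C I J n ty)"
  have event: "{arcs. (ty, arcs) \<in> arc_event a t s} = (\<lambda>f. f a) -` typed_arcs t s ty" for ty
    unfolding arc_event_def typed_arcs_def by auto
  have marginal: "map_pmf (\<lambda>f. f a) (?Q ty) = arc_pmf C I J n ty" for ty
    using assms by (subst Pi_pmf_component) auto
  have "measure_pmf.prob (CCI n \<mu> T C I J) (arc_event a t s)
      = (\<integral>ty. measure_pmf.prob (?Q ty) ((\<lambda>f. f a) -` typed_arcs t s ty) \<partial>?P)"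
    unfolding CCI_def by (simp add: prob_bind_pmf vimage_def event[unfolded vimage_def])
  also have "\<dots> = (\<integral>ty. measure_pmf.prob (arc_pmf C I J n ty) (typed_arcs t s ty) \<partial>?P)"
    by (simp only: measure_map_pmf [symmetric] marginal)
  also have "\<dots> = (\<integral>ty. (\<integral>c. measure_pmf.prob (arc_given_colour I J n ty c) (typed_arcs t s ty) \<partial>C) \<partial>?P)"
    by (simp add: arc_pmf_eq_bind prob_bind_pmf)
  also have "\<dots> = (\<integral>c. (\<integral>ty. measure_pmf.prob (arc_given_colour I J n ty c) (typed_arcs t s ty) \<partial>?P) \<partial>C)"
    by (rule integral_prob_commute_pmf)
  finally show ?thesis by (simp add: prob_arc_given_colour)
qed

lemma kappa_eq_expectation:
  assumes "\<mu> > 0"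
  shows "pmf T t * pmf T s * kappa \<mu> T C I J t s / \<mu>
    = measure_pmf.expectation C (\<lambda>c.
        measure_pmf.prob T ({k. I k (fst c)} \<inter> {t}) / measure_pmf.prob T {k. I k (fst c)}
        * (measure_pmf.prob T ({k. J k (snd c)} \<inter> {s}) / measure_pmf.prob T {k. J k (snd c)}))"
proof -
  have summand: "pmf T t * pmf T s * ((if I t i \<and> J s j then 1 else 0) / (lam T I i * rho T J j))
      = measure_pmf.prob T ({k. I k i} \<inter> {t}) / measure_pmf.prob T {k. I k i}
        * (measure_pmf.prob T ({k. J k j} \<inter> {s}) / measure_pmf.prob T {k. J k j})" for i j
    by (cases "I t i"; cases "J s j") (simp_all add: lam_def rho_def measure_pmf_single)
  have "pmf T t * pmf T s * kappa \<mu> T C I J t s / \<mu>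
      = measure_pmf.expectation C (\<lambda>c. pmf T t * pmf T s *
          (case c of (i, j) \<Rightarrow> (if I t i \<and> J s j then 1 else 0) / (lam T I i * rho T J j)))"
    using assms by (simp add: kappa_def)
  also have "\<dots> = measure_pmf.expectation C (\<lambda>c.
        measure_pmf.prob T ({k. I k (fst c)} \<inter> {t}) / measure_pmf.prob T {k. I k (fst c)}
        * (measure_pmf.prob T ({k. J k (snd c)} \<inter> {s}) / measure_pmf.prob T {k. J k (snd c)}))"
    by (intro Bochner_Integration.integral_cong) (auto simp: summand lam_def rho_def measure_pmf_single split: prod.split)
  finally show ?thesis .
qed

lemma abs_prob_arc_event_diff_le:
  assumes "n \<ge> 1" "\<mu> > 0" "a \<in> {1..nat \<lfloor>\<mu> * real n\<rfloor>}" "\<delta> > 0"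
    and "\<And>i. lam T I i = 0 \<or> \<delta> \<le> lam T I i" and "\<And>j. rho T J j = 0 \<or> \<delta> \<le> rho T J j"
  shows "\<bar>measure_pmf.prob (CCI n \<mu> T C I J) (arc_event a t s)
           - pmf T t * pmf T s * kappa \<mu> T C I J t s / \<mu>\<bar> \<le> 8 / (\<delta> * sqrt n)"
proof -
  define F where "F c = measure_pmf.expectation (Pi_pmf {1..n} 0 (\<lambda>_. T))
      (\<lambda>ty. cond_freq {1..n} {t} {k. I k (fst c)} ty * cond_freq {1..n} {s} {k. J k (snd c)} ty)"
    for c :: "nat \<times> nat"
  define G where "G c = measure_pmf.prob T ({k. I k (fst c)} \<inter> {t}) / measure_pmf.prob T {k. I k (fst c)}
      * (measure_pmf.prob T ({k. J k (snd c)} \<inter> {s}) / measure_pmf.prob T {k. J k (snd c)})"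
    for c :: "nat \<times> nat"
  define e where "e = 8 / (\<delta> * sqrt n)"
  have F_G: "\<bar>F c - G c\<bar> \<le> e" for c
    using abs_expectation_cond_freq_product_le[of "{1..n}" \<delta> T "{k. I k (fst c)}" "{k. J k (snd c)}"]
      assms(1,4-6)
    unfolding F_def G_def e_def lam_def rho_def by simp
  have "0 \<le> G c \<and> G c \<le> 1" for c
    unfolding G_def by (intro conjI mult_nonneg_nonneg mult_le_one cond_prob_bounds)
  then have G: "\<bar>G c\<bar> \<le> 1" for c
    by (simp add: abs_le_iff)
  have "\<bar>measure_pmf.expectation C F - measure_pmf.expectation C G\<bar> \<le> measure_pmf.expectation C (\<lambda>_. e)"
  proof (rule abs_expectation_diff_le[OF _ _ _ F_G])
    have "\<bar>F c\<bar> \<le> 1 + e" for c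
      using F_G[of c] G[of c] by linarith
    then show "integrable (measure_pmf C) F"
      by (rule integrable_measure_pmf_bounded)
    show "integrable (measure_pmf C) G"
      by (rule integrable_measure_pmf_bounded[OF G])
  qed simp
  moreover have "measure_pmf.prob (CCI n \<mu> T C I J) (arc_event a t s) = measure_pmf.expectation C F"
    unfolding F_def by (rule prob_arc_event[OF assms(3)])
  moreover have "pmf T t * pmf T s * kappa \<mu> T C I J t s / \<mu> = measure_pmf.expectation C G"
    unfolding G_def by (rule kappa_eq_expectation[OF assms(2)])
  ultimately show ?thesis by (simp add: e_def)
qed

theorem lemma10:
  fixes T :: "nat pmf" and C :: "(nat \<times> nat) pmf"
    and I J :: "nat \<Rightarrow> nat \<Rightarrow> bool" and \<mu> \<epsilon> \<tau> :: real
  assumes "\<mu> > 0"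
    and "\<epsilon> > 0" and "integrable (measure_pmf T) (\<lambda>k. real k powr (1 + \<epsilon>))"
    and "\<exists>\<delta>>0. \<forall>i. lam T I i > 0 \<longrightarrow> lam T I i \<ge> \<delta>"
    and "\<exists>\<delta>>0. \<forall>j. rho T J j > 0 \<longrightarrow> rho T J j \<ge> \<delta>"
    and "0 < \<tau>" and "\<tau> < 1"
  shows "\<exists>Ch>0. \<forall>n t s a. n \<ge> 2 \<longrightarrow> stable T n \<tau> t \<longrightarrow> stable T n \<tau> s
           \<longrightarrow> a \<in> {1..nat \<lfloor>\<mu> * real n\<rfloor>} \<longrightarrow>
           \<bar>measure_pmf.prob (CCI n \<mu> T C I J) (arc_event a t s)
              - pmf T t * pmf T s * kappa \<mu> T C I J t s / \<mu>\<bar>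
           \<le> Ch * ln (real n) * real n powr (- \<tau> / 2)"
proof -
  have "0 \<le> lam T I i" "0 \<le> rho T J j" for i j
    by (simp_all add: lam_def rho_def)
  then obtain \<delta> where \<delta>: "\<delta> > 0" and lam: "\<And>i. lam T I i = 0 \<or> \<delta> \<le> lam T I i"
    and rho: "\<And>j. rho T J j = 0 \<or> \<delta> \<le> rho T J j"
    using ex_common_positive_lower_bound[OF _ _ assms(4,5)] by blast
  define Ch where "Ch = 8 / (\<delta> * ln 2)"
  have "\<bar>measure_pmf.prob (CCI n \<mu> T C I J) (arc_event a t s)
          - pmf T t * pmf T s * kappa \<mu> T C I J t s / \<mu>\<bar> \<le> Ch * ln (real n) * real n powr (- \<tau> / 2)"
    if "n \<ge> 2" "a \<in> {1..nat \<lfloor>\<mu> * real n\<rfloor>}" for n t s a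
  proof -
    have "\<bar>measure_pmf.prob (CCI n \<mu> T C I J) (arc_event a t s)
          - pmf T t * pmf T s * kappa \<mu> T C I J t s / \<mu>\<bar> \<le> 8 / \<delta> * (1 / sqrt n)"
      using abs_prob_arc_event_diff_le[OF _ assms(1) that(2) \<delta> lam rho] that(1) by simp
    also have "\<dots> \<le> 8 / \<delta> * (ln n * n powr (- \<tau> / 2) / ln 2)"
      using \<delta> assms(7) that(1) by (intro mult_left_mono inverse_sqrt_le_ln_mult_powr) auto
    finally show ?thesis by (simp add: Ch_def)
  qed
  moreover have "Ch > 0" using \<delta> by (simp add: Ch_def)
  ultimately show ?thesis by blast
qed

end
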